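(* Let $M=(E,\mathcal{I})$ be a matroid of rank $r$, $u:E\to\mathbb{Z}_{\ge0}$ integer capacities and $k\in\mathbb{N}$. Suppose bases $B_1,\dots,B_k$ (with insertion levels) and levels $\ell:E\to\mathbb{Z}_{\ge0}$ satisfy invariants (I1)–(I3) with height $h>r+2$. Then there exists a level $j$ such that $$\sum_{e\in E}\min\{u(e),x(e)\}\ \ge\ u(E_{<j})+k\,\mathrm{rank}(E_{\ge j}).$$ Consequently $B_1,\dots,B_k$ is an optimal solution of the $k$-fold matroid union problem and $E_{\ge j}$ is an optimal dual solution.
   Context: For $e\in E$, $x(e)=|\{i: e\in B_i\}|$; $e$ is uncovered if $x(e)<u(e)$. $u(T)=\sum_{e\in T}u(e)$. The $k$-fold matroid union problem maximizes $\sum_e\min\{u(e),x(e)\}$ over $k$ bases; the dual minimizes $k\,\mathrm{rank}(S)+u(E\setminus S)$ over $S\subseteq E$, and the optimal values coincide. Each element $e\in B_i$ carries an insertion level (the value of $\ell(e)$ when $e$ was inserted into $B_i$; levels never decrease, so insertion levels are at most current levels). $E_j=\{e:\ell(e)=j\}$ and analogously $E_{<j},E_{\ge j},E_{>j}$; $B_{i,\ge j}$ denotes the elements of $B_i$ with insertion level at least $j$. Invariants: (I1) $\ell(e)=0$ whenever $e$ lies in strictly more than $u(e)$ bases; (I2) for all $i$ and $j$, $B_{i,\ge j}$ spans $E_{>j}$; (I3) every uncovered $e$ has $\ell(e)\ge h$. *)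

theory Defs
  imports Main
begin

definition matroid :: "'a set \<Rightarrow> ('a set \<Rightarrow> bool) \<Rightarrow> bool" where
  "matroid E indep \<longleftrightarrow>
     finite E \<and>
     (\<forall>I. indep I \<longrightarrow> I \<subseteq> E) \<and>
     indep {} \<and>
     (\<forall>I J. indep J \<and> I \<subseteq> J \<longrightarrow> indep I) \<and>
     (\<forall>I J. indep I \<and> indep J \<and> card I < card J \<longrightarrow> (\<exists>e\<in>J - I. indep (insert e I)))"

definition mrank :: "('a set \<Rightarrow> bool) \<Rightarrow> 'a set \<Rightarrow> nat" where
  "mrank indep S = Max (card ` {I. I \<subseteq> S \<and> indep I})"

definition is_basis :: "'a set \<Rightarrow> ('a set \<Rightarrow> bool) \<Rightarrow> 'a set \<Rightarrow> bool" where
  "is_basis E indep B \<longleftrightarrow> B \<subseteq> E \<and> indep B \<and> (\<forall>e\<in>E - B. \<not> indep (insert e B))"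

definition mclosure :: "'a set \<Rightarrow> ('a set \<Rightarrow> bool) \<Rightarrow> 'a set \<Rightarrow> 'a set" where
  "mclosure E indep A = {e \<in> E. mrank indep (insert e A) = mrank indep A}"

definition spans :: "'a set \<Rightarrow> ('a set \<Rightarrow> bool) \<Rightarrow> 'a set \<Rightarrow> 'a set \<Rightarrow> bool" where
  "spans E indep A T \<longleftrightarrow> T \<subseteq> mclosure E indep A"

definition coverage :: "nat \<Rightarrow> (nat \<Rightarrow> 'a set) \<Rightarrow> 'a \<Rightarrow> nat" where
  "coverage k B e = card {i. i < k \<and> e \<in> B i}"

definition union_value :: "'a set \<Rightarrow> ('a \<Rightarrow> nat) \<Rightarrow> nat \<Rightarrow> (nat \<Rightarrow> 'a set) \<Rightarrow> nat" where
  "union_value E u k B = (\<Sum>e\<in>E. min (u e) (coverage k B e))"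

definition dual_value :: "'a set \<Rightarrow> ('a set \<Rightarrow> bool) \<Rightarrow> ('a \<Rightarrow> nat) \<Rightarrow> nat \<Rightarrow> 'a set \<Rightarrow> nat" where
  "dual_value E indep u k S = k * mrank indep S + sum u (E - S)"

end

theory Submission
  imports Defs
begin

text \<open>
  Weak duality gives \<open>union_value \<le> dual_value S\<close> for every choice of bases and every \<open>S\<close>,
  so it suffices to find a level \<open>j\<close> at which equality holds for \<open>S = E\<^sub>\<ge>\<^sub>j\<close>.
  The ranks \<open>rank E\<^sub>\<ge>\<^sub>j\<close> are at most \<open>rank E < h\<close>, so they cannot strictly decrease at
  every one of the \<open>h\<close> steps \<open>j = 1, \<dots>, h\<close>; pick \<open>j\<close> with
  \<open>rank E\<^sub>\<ge>\<^sub>j \<le> rank E\<^sub>>\<^sub>j\<close>. By (I3) every element below level \<open>j \<le> h\<close> is covered, and by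
  (I1) no element at level \<open>j \<ge> 1\<close> is overcovered, so the primal value is
  \<open>u(E\<^sub><\<^sub>j) + \<Sigma>\<^sub>i |B\<^sub>i \<inter> E\<^sub>\<ge>\<^sub>j|\<close>. By (I2) the independent set \<open>B\<^sub>i\<^sub>,\<^sub>\<ge>\<^sub>j \<subseteq> B\<^sub>i \<inter> E\<^sub>\<ge>\<^sub>j\<close>
  spans \<open>E\<^sub>>\<^sub>j\<close>, hence \<open>|B\<^sub>i \<inter> E\<^sub>\<ge>\<^sub>j| \<ge> rank E\<^sub>>\<^sub>j \<ge> rank E\<^sub>\<ge>\<^sub>j\<close>, which is the dual value.
\<close>

lemma matroid_finite: "matroid E indep \<Longrightarrow> finite E"
  unfolding matroid_def by blast

lemma matroid_indep_finite: "matroid E indep \<Longrightarrow> indep I \<Longrightarrow> finite I"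
  unfolding matroid_def by (meson finite_subset)

lemma matroid_indep_subset: "matroid E indep \<Longrightarrow> indep J \<Longrightarrow> I \<subseteq> J \<Longrightarrow> indep I"
  unfolding matroid_def by blast

lemma matroid_augment:
  "matroid E indep \<Longrightarrow> indep I \<Longrightarrow> indep J \<Longrightarrow> card I < card J \<Longrightarrow> \<exists>e\<in>J - I. indep (insert e I)"
  unfolding matroid_def by blast

lemma finite_indep_subsets: "matroid E indep \<Longrightarrow> finite {I. I \<subseteq> S \<and> indep I}"
proof -
  assume M: "matroid E indep"
  then have "{I. I \<subseteq> S \<and> indep I} \<subseteq> Pow E"
    unfolding matroid_def by auto
  then show ?thesis
    using matroid_finite[OF M] by (meson finite_Pow_iff finite_subset)
qed

lemma mrank_ge_card: "matroid E indep \<Longrightarrow> I \<subseteq> S \<Longrightarrow> indep I \<Longrightarrow> card I \<le> mrank indep S"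
  unfolding mrank_def by (rule Max_ge) (auto simp: finite_indep_subsets)

lemma mrank_attained:
  assumes M: "matroid E indep"
  obtains I where "I \<subseteq> S" "indep I" "card I = mrank indep S"
proof -
  have "indep {}"
    using M unfolding matroid_def by blast
  then have "mrank indep S \<in> card ` {I. I \<subseteq> S \<and> indep I}"
    unfolding mrank_def using M by (intro Max_in) (auto simp: finite_indep_subsets)
  then obtain I where "I \<subseteq> S" "indep I" "mrank indep S = card I"
    by auto
  then show ?thesis
    using that by simp
qed

lemma mrank_mono:
  assumes M: "matroid E indep" and "S \<subseteq> T"
  shows "mrank indep S \<le> mrank indep T"
proof -
  obtain I where "I \<subseteq> S" "indep I" "card I = mrank indep S"
    using mrank_attained[OF M] .
  with \<open>S \<subseteq> T\<close> have "card I \<le> mrank indep T"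
    using mrank_ge_card[OF M] by blast
  with \<open>card I = mrank indep S\<close> show ?thesis
    by simp
qed

lemma mrank_indep:
  assumes M: "matroid E indep" and A: "indep A"
  shows "mrank indep A = card A"
proof -
  obtain I where I: "I \<subseteq> A" "card I = mrank indep A"
    using mrank_attained[OF M] .
  then have "mrank indep A \<le> card A"
    using card_mono[OF matroid_indep_finite[OF M A] I(1)] by simp
  then show ?thesis
    using mrank_ge_card[OF M order_refl A] by simp
qed

lemma not_indep_insert_mclosure:
  assumes M: "matroid E indep" and A: "indep A" and e: "e \<notin> A" "e \<in> mclosure E indep A"
  shows "\<not> indep (insert e A)"
proof
  assume "indep (insert e A)"
  then have "mrank indep (insert e A) = Suc (card A)"
    using mrank_indep[OF M] matroid_indep_finite[OF M A] e(1) by simp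
  moreover have "mrank indep (insert e A) = mrank indep A"
    using e(2) unfolding mclosure_def by simp
  ultimately show False
    using mrank_indep[OF M A] by simp
qed

lemma mrank_le_card_if_spans:
  assumes M: "matroid E indep" and A: "indep A" and "spans E indep A Y"
  shows "mrank indep Y \<le> card A"
proof (rule ccontr)
  obtain I where I: "I \<subseteq> Y" "indep I" "card I = mrank indep Y"
    using mrank_attained[OF M] .
  assume "\<not> mrank indep Y \<le> card A"
  then have "card A < card I"
    using I(3) by simp
  then obtain e where e: "e \<in> I - A" "indep (insert e A)"
    using matroid_augment[OF M A I(2)] by blast
  have "e \<in> mclosure E indep A"
    using \<open>spans E indep A Y\<close> I(1) e(1) unfolding spans_def by blast
  with e show False
    using not_indep_insert_mclosure[OF M A] by blast
qed

lemma mrank_le_card_inter_if_spans: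
  assumes M: "matroid E indep" and "indep B" and A: "A \<subseteq> B \<inter> X"
    and "spans E indep A Y" and "mrank indep X \<le> mrank indep Y"
  shows "mrank indep X \<le> card (B \<inter> X)"
proof -
  have "indep A"
    using matroid_indep_subset[OF M \<open>indep B\<close>] A by blast
  then have "mrank indep Y \<le> card A"
    using mrank_le_card_if_spans[OF M _ \<open>spans E indep A Y\<close>] by blast
  also have "\<dots> \<le> card (B \<inter> X)"
    using card_mono[OF _ A] matroid_indep_finite[OF M \<open>indep B\<close>] by simp
  finally show ?thesis
    using \<open>mrank indep X \<le> mrank indep Y\<close> by simp
qed

lemma sum_coverage: "finite X \<Longrightarrow> (\<Sum>e\<in>X. coverage k B e) = (\<Sum>i<k. card (B i \<inter> X))"
proof -
  assume X: "finite X"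
  have "(\<Sum>e\<in>X. coverage k B e) = (\<Sum>e\<in>X. \<Sum>i<k. if e \<in> B i then 1 else 0)"
    unfolding coverage_def
    by (intro sum.cong refl) (simp add: sum.If_cases lessThan_def Collect_conj_eq Int_commute)
  also have "\<dots> = (\<Sum>i<k. \<Sum>e\<in>X. if e \<in> B i then 1 else 0)"
    by (rule sum.swap)
  also have "\<dots> = (\<Sum>i<k. card (B i \<inter> X))"
    using X by (intro sum.cong refl) (simp add: sum.If_cases Int_commute)
  finally show ?thesis .
qed

lemma union_value_le_dual_value:
  assumes M: "matroid E indep" and C: "\<forall>i<k. is_basis E indep (C i)" and S: "S \<subseteq> E"
  shows "union_value E u k C \<le> dual_value E indep u k S"
proof -
  have fE: "finite E" and fS: "finite S"
    using matroid_finite[OF M] S finite_subset by auto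
  have "union_value E u k C
      = (\<Sum>e\<in>S. min (u e) (coverage k C e)) + (\<Sum>e\<in>E - S. min (u e) (coverage k C e))"
    unfolding union_value_def using S fE by (metis sum.subset_diff add.commute)
  also have "\<dots> \<le> (\<Sum>e\<in>S. coverage k C e) + sum u (E - S)"
    by (intro add_mono sum_mono) auto
  also have "(\<Sum>e\<in>S. coverage k C e) = (\<Sum>i<k. card (C i \<inter> S))"
    using sum_coverage[OF fS] .
  also have "\<dots> \<le> (\<Sum>i<k. mrank indep S)"
  proof (rule sum_mono)
    fix i assume "i \<in> {..<k}"
    then have "indep (C i \<inter> S)"
      using C matroid_indep_subset[OF M] unfolding is_basis_def by blast
    then show "card (C i \<inter> S) \<le> mrank indep S"
      using mrank_ge_card[OF M] by blast
  qed
  finally show ?thesis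
    unfolding dual_value_def by (simp add: mult.commute)
qed

lemma exists_step_not_decreasing:
  fixes f :: "nat \<Rightarrow> nat"
  assumes "f a < n"
  shows "\<exists>j. a \<le> j \<and> j < a + n \<and> f j \<le> f (Suc j)"
proof (rule ccontr)
  assume "\<not> ?thesis"
  then have decr: "f (Suc j) < f j" if "a \<le> j" "j < a + n" for j
    using that by force
  have "f (a + i) + i \<le> f a" if "i \<le> n" for i
    using that
  proof (induction i)
    case (Suc i)
    then show ?case
      using decr[of "a + i"] by simp
  qed simp
  from this[of n] assms show False
    by simp
qed

lemma union_value_split_at_level:
  fixes lvl :: "'a \<Rightarrow> nat"
  assumes fE: "finite E"
    and I1: "\<And>e. e \<in> E \<Longrightarrow> coverage k B e > u e \<Longrightarrow> lvl e = 0"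
    and I3: "\<And>e. e \<in> E \<Longrightarrow> coverage k B e < u e \<Longrightarrow> lvl e \<ge> h"
    and j: "0 < j" "j \<le> h"
  shows "union_value E u k B
      = sum u {e \<in> E. lvl e < j} + (\<Sum>e\<in>{e \<in> E. lvl e \<ge> j}. coverage k B e)"
proof -
  let ?L = "{e \<in> E. lvl e < j}" and ?X = "{e \<in> E. lvl e \<ge> j}"
  have covered: "min (u e) (coverage k B e) = u e" if "e \<in> ?L" for e
  proof -
    have "\<not> coverage k B e < u e"
      using that I3[of e] j(2) by auto
    then show ?thesis
      by simp
  qed
  have not_overcovered: "min (u e) (coverage k B e) = coverage k B e" if "e \<in> ?X" for e
  proof -
    have "\<not> coverage k B e > u e"
      using that I1[of e] j(1) by auto
    then show ?thesis
      by simp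
  qed
  have "E = ?L \<union> ?X"
    by auto
  then have "union_value E u k B = (\<Sum>e\<in>?L \<union> ?X. min (u e) (coverage k B e))"
    unfolding union_value_def by (rule arg_cong)
  also have "\<dots> = (\<Sum>e\<in>?L. min (u e) (coverage k B e)) + (\<Sum>e\<in>?X. min (u e) (coverage k B e))"
    using fE by (intro sum.union_disjoint) auto
  also have "\<dots> = sum u ?L + (\<Sum>e\<in>?X. coverage k B e)"
    using covered not_overcovered by simp
  finally show ?thesis .
qed

lemma dual_value_at_level_le_union_value:
  fixes lvl :: "'a \<Rightarrow> nat"
  assumes M: "matroid E indep"
    and bases: "\<And>i. i < k \<Longrightarrow> is_basis E indep (B i)"
    and ins_le: "\<And>i e. i < k \<Longrightarrow> e \<in> B i \<Longrightarrow> ins i e \<le> lvl e"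
    and I1: "\<And>e. e \<in> E \<Longrightarrow> coverage k B e > u e \<Longrightarrow> lvl e = 0"
    and I2: "\<And>i. i < k \<Longrightarrow> spans E indep {e \<in> B i. ins i e \<ge> j} {e \<in> E. lvl e > j}"
    and I3: "\<And>e. e \<in> E \<Longrightarrow> coverage k B e < u e \<Longrightarrow> lvl e \<ge> h"
    and j: "0 < j" "j \<le> h"
    and rank_step: "mrank indep {e \<in> E. lvl e \<ge> j} \<le> mrank indep {e \<in> E. lvl e > j}"
  shows "dual_value E indep u k {e \<in> E. lvl e \<ge> j} \<le> union_value E u k B"
proof -
  let ?L = "{e \<in> E. lvl e < j}" and ?X = "{e \<in> E. lvl e \<ge> j}"
  have fE: "finite E"
    using matroid_finite[OF M] .
  have "mrank indep ?X \<le> card (B i \<inter> ?X)" if i: "i < k" for i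
  proof (rule mrank_le_card_inter_if_spans[OF M _ _ I2[OF i] rank_step])
    show "indep (B i)" and "{e \<in> B i. ins i e \<ge> j} \<subseteq> B i \<inter> ?X"
      using bases[OF i] ins_le[OF i] order_trans unfolding is_basis_def by blast+
  qed
  then have "k * mrank indep ?X \<le> (\<Sum>i<k. card (B i \<inter> ?X))"
    using sum_mono[of "{..<k}" "\<lambda>_. mrank indep ?X"] by simp
  also have "\<dots> = (\<Sum>e\<in>?X. coverage k B e)"
    using fE by (simp add: sum_coverage)
  finally have "sum u ?L + k * mrank indep ?X \<le> union_value E u k B"
    using union_value_split_at_level[OF fE I1 I3 j] by simp
  moreover have "E - ?X = ?L"
    by auto
  ultimately show ?thesis
    unfolding dual_value_def by simp
qed

theorem mainTheorem2:
  fixes E :: "'a set" and indep :: "'a set \<Rightarrow> bool"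
    and u :: "'a \<Rightarrow> nat" and k :: nat
    and B :: "nat \<Rightarrow> 'a set" and ins :: "nat \<Rightarrow> 'a \<Rightarrow> nat"
    and lvl :: "'a \<Rightarrow> nat" and h :: nat
  assumes M: "matroid E indep"
    and bases: "\<And>i. i < k \<Longrightarrow> is_basis E indep (B i)"
    and ins_le: "\<And>i e. i < k \<Longrightarrow> e \<in> B i \<Longrightarrow> ins i e \<le> lvl e"
    and I1: "\<And>e. e \<in> E \<Longrightarrow> coverage k B e > u e \<Longrightarrow> lvl e = 0"
    and I2: "\<And>i j. i < k \<Longrightarrow>
               spans E indep {e \<in> B i. ins i e \<ge> j} {e \<in> E. lvl e > j}"
    and I3: "\<And>e. e \<in> E \<Longrightarrow> coverage k B e < u e \<Longrightarrow> lvl e \<ge> h"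
    and height: "h > mrank indep E + 2"
  shows "\<exists>j. union_value E u k B \<ge>
               sum u {e \<in> E. lvl e < j} + k * mrank indep {e \<in> E. lvl e \<ge> j}
           \<and> (\<forall>C. (\<forall>i<k. is_basis E indep (C i)) \<longrightarrow> union_value E u k C \<le> union_value E u k B)
           \<and> (\<forall>S. S \<subseteq> E \<longrightarrow>
                 dual_value E indep u k {e \<in> E. lvl e \<ge> j} \<le> dual_value E indep u k S)"
proof -
  define f where "f j = mrank indep {e \<in> E. lvl e \<ge> j}" for j
  have "f 1 < h"
    using mrank_mono[OF M, of "{e \<in> E. lvl e \<ge> 1}" E] height unfolding f_def by auto
  then obtain j where j: "0 < j" "j \<le> h" "f j \<le> f (Suc j)"
    using exists_step_not_decreasing[of f 1 h] by (auto simp: Suc_le_eq less_Suc_eq_le)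
  let ?X = "{e \<in> E. lvl e \<ge> j}"
  have "{e \<in> E. lvl e > j} = {e \<in> E. lvl e \<ge> Suc j}"
    by auto
  then have cert: "dual_value E indep u k ?X \<le> union_value E u k B"
    using dual_value_at_level_le_union_value[OF M bases ins_le I1 I2 I3 j(1,2)] j(3)
    unfolding f_def by simp
  have "E - ?X = {e \<in> E. lvl e < j}"
    by auto
  then have "sum u {e \<in> E. lvl e < j} + k * mrank indep ?X \<le> union_value E u k B"
    using cert unfolding dual_value_def by simp
  moreover have "union_value E u k C \<le> union_value E u k B" if "\<forall>i<k. is_basis E indep (C i)" for C
    using union_value_le_dual_value[OF M that, of ?X u] cert by simp
  moreover have "dual_value E indep u k ?X \<le> dual_value E indep u k S" if "S \<subseteq> E" for S
    using union_value_le_dual_value[OF M _ that, of k B u] bases cert by simp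
  ultimately show ?thesis
    by blast
qed

end
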